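(* Fix $\omega\in(\frac\pi2,\pi)$ and $q_0$ with $0<q_0<\min\{\frac1{\sqrt2}\sin\omega,\sqrt2(1-\frac\omega\pi)\}$. For each $q\in(0,q_0]$ let $(a_q,f_q,g_q)\in\mathcal C_q$ with $0\le f_q\le\frac\pi2$ be a minimizer of $L$ over $\mathcal C_q$ (which solves (4)–(6)). Then the electric charge $$Q_e(q)=2\int_0^\infty a_q^2(r)\,g_q(r)\,dr$$ satisfies $Q_e(q)\to0$ as $q\to0^+$.
   Context: Fix $\kappa>0$; $'=d/dr$. Equations (4)–(6): $a''=\frac{1}{r^2}a(a^2-1)+\frac14 a\sin^2f+\kappa a\sin^2f\,(f')^2+\frac{1}{r^2}\kappa a^3\sin^4f-\frac{ag^2}{2}$; $8\kappa(a^2\sin^2f\,f')'+(r^2f')'=2a^2\sin f\cos f+8\kappa a^2\sin f\cos f\,(f')^2+\frac{8\kappa a^4\sin^3f\cos f}{r^2}$; $(r^2g')'=2a^2g$. Define $\mathcal E_1=2\big(2(a')^2+\frac{(a^2-1)^2}{r^2}\big)+\frac12\big(r^2(f')^2+2a^2\sin^2f\big)+2\kappa a^2\sin^2f\big(2(f')^2+\frac{a^2\sin^2f}{r^2}\big)$, $\mathcal E_2=r^2(g')^2+2a^2g^2$, $L(a,f,g)=\int_0^\infty(\mathcal E_1-\mathcal E_2)\,dr$, $E(a,f,g)=\int_0^\infty(\mathcal E_1+\mathcal E_2)\,dr$, and for functions $a,G$, $E_2(a,G)=\int_0^\infty(r^2(G')^2+2a^2G^2)\,dr$. For $q>0$,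 the admissible set $\mathcal A_q$ consists of triples $(a,f,g)$ of continuous functions on $[0,\infty)$ that are absolutely continuous on every compact subinterval of $(0,\infty)$, satisfy $a(0)=1$, $\lim_{r\to\infty}a(r)=0$, $f(0)=0$, $\lim_{r\to\infty}f(r)=\pi-\omega$, $\lim_{r\to\infty}g(r)=q$, and have $E(a,f,g)<\infty$. The constrained class $\mathcal C_q$ consists of those $(a,f,g)\in\mathcal A_q$ such that $\int_0^\infty(r^2g'G'+2a^2gG)\,dr=0$ for every function $G$ on $(0,\infty)$, absolutely continuous on compact subintervals of $(0,\infty)$, with $G(r)\to0$ as $r\to\infty$ and $E_2(a,G)<\infty$. *)

theory Defs
  imports "HOL-Analysis.Analysis"
begin

definition abs_cont_on :: "real \<Rightarrow> real \<Rightarrow> (real \<Rightarrow> real) \<Rightarrow> bool" where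
  "abs_cont_on c d h \<longleftrightarrow>
     (\<forall>\<epsilon>>0. \<exists>\<delta>>0. \<forall>(n::nat) (x::nat \<Rightarrow> real) (y::nat \<Rightarrow> real).
        (\<forall>i<n. c \<le> x i \<and> x i \<le> y i \<and> y i \<le> d) \<and>
        (\<forall>i<n. \<forall>j<n. i \<noteq> j \<longrightarrow> y i \<le> x j \<or> y j \<le> x i) \<and>
        (\<Sum>i<n. y i - x i) < \<delta>
        \<longrightarrow> (\<Sum>i<n. \<bar>h (y i) - h (x i)\<bar>) < \<epsilon>)"

definition loc_abs_cont :: "(real \<Rightarrow> real) \<Rightarrow> bool" where
  "loc_abs_cont h \<longleftrightarrow> (\<forall>c d. 0 < c \<longrightarrow> c \<le> d \<longrightarrow> abs_cont_on c d h)"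

text \<open>Energy densities; the derivative is the (a.e. defined) classical derivative.\<close>
definition dens1 :: "real \<Rightarrow> (real \<Rightarrow> real) \<Rightarrow> (real \<Rightarrow> real) \<Rightarrow> real \<Rightarrow> real" where
  "dens1 \<kappa> a f r =
     2 * (2 * (deriv a r)^2 + (a r ^ 2 - 1)^2 / r^2)
     + 1/2 * (r^2 * (deriv f r)^2 + 2 * a r ^ 2 * (sin (f r))^2)
     + 2 * \<kappa> * a r ^ 2 * (sin (f r))^2 *
         (2 * (deriv f r)^2 + a r ^ 2 * (sin (f r))^2 / r^2)"

definition dens2 :: "(real \<Rightarrow> real) \<Rightarrow> (real \<Rightarrow> real) \<Rightarrow> real \<Rightarrow> real" where
  "dens2 a g r = r^2 * (deriv g r)^2 + 2 * a r ^ 2 * (g r)^2"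

definition energy :: "real \<Rightarrow> (real \<Rightarrow> real) \<Rightarrow> (real \<Rightarrow> real) \<Rightarrow> (real \<Rightarrow> real) \<Rightarrow> ennreal" where
  "energy \<kappa> a f g = (\<integral>\<^sup>+ r\<in>{0<..}. ennreal (dens1 \<kappa> a f r + dens2 a g r) \<partial>lebesgue)"

definition energy2 :: "(real \<Rightarrow> real) \<Rightarrow> (real \<Rightarrow> real) \<Rightarrow> ennreal" where
  "energy2 a G = (\<integral>\<^sup>+ r\<in>{0<..}. ennreal (dens2 a G r) \<partial>lebesgue)"

definition Lfun :: "real \<Rightarrow> (real \<Rightarrow> real) \<Rightarrow> (real \<Rightarrow> real) \<Rightarrow> (real \<Rightarrow> real) \<Rightarrow> real" where
  "Lfun \<kappa> a f g = (LINT r:{0<..}|lebesgue. dens1 \<kappa> a f r - dens2 a g r)"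

definition admissible :: "real \<Rightarrow> real \<Rightarrow> real \<Rightarrow>
    ((real \<Rightarrow> real) \<times> (real \<Rightarrow> real) \<times> (real \<Rightarrow> real)) set" where
  "admissible \<kappa> \<omega> q = {(a, f, g).
     continuous_on {0..} a \<and> continuous_on {0..} f \<and> continuous_on {0..} g \<and>
     loc_abs_cont a \<and> loc_abs_cont f \<and> loc_abs_cont g \<and>
     a 0 = 1 \<and> (a \<longlongrightarrow> 0) at_top \<and>
     f 0 = 0 \<and> (f \<longlongrightarrow> pi - \<omega>) at_top \<and>
     (g \<longlongrightarrow> q) at_top \<and>
     energy \<kappa> a f g < \<infinity>}"

definition constrained :: "real \<Rightarrow> real \<Rightarrow> real \<Rightarrow>
    ((real \<Rightarrow> real) \<times> (real \<Rightarrow> real) \<times> (real \<Rightarrow> real)) set" where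
  "constrained \<kappa> \<omega> q = {(a, f, g). (a, f, g) \<in> admissible \<kappa> \<omega> q \<and>
     (\<forall>G. loc_abs_cont G \<longrightarrow> (G \<longlongrightarrow> 0) at_top \<longrightarrow> energy2 a G < \<infinity> \<longrightarrow>
        (LINT r:{0<..}|lebesgue. r^2 * deriv g r * deriv G r + 2 * a r ^ 2 * g r * G r) = 0)}"

definition charge :: "(real \<Rightarrow> real) \<Rightarrow> (real \<Rightarrow> real) \<Rightarrow> real" where
  "charge a g = 2 * (LINT r:{0<..}|lebesgue. a r ^ 2 * g r)"

end

theory Submission
  imports Defs
begin

(*
  For a triple (a,f,g) in C_q write D1 = \<integral> dens1 and D2 = \<integral> dens2, so that L = D1 - D2.
  (1) Testing the constraint with G = g - q gives D2 = q * Q_e, where Q_e = 2 \<integral> a\<^sup>2 g.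
  (2) Multiplying g by c > 0 maps C_q into C_{cq} and turns L into D1 - c\<^sup>2 D2.
  (3) Comparing the minimizer at q' with the rescaled minimizer at q, and vice versa,
      shows that D2(q)/q\<^sup>2 is non-decreasing in q; hence 0 \<le> Q_e(q) = D2(q)/q \<le> q D2(q0)/q0\<^sup>2.
  The densities use the Hilbert-choice derivative, which takes one fixed unspecified value
  at points of non-differentiability; so (2) needs g to be differentiable almost everywhere,
  which again follows from the constraint, tested against g - q and 2(g - q).
*)

section \<open>The derivative convention\<close>

text \<open>The value of deriv at points where the function is not differentiable.\<close>
definition deriv_default :: real where
  "deriv_default = (SOME D::real. False)"

lemma deriv_nondifferentiable:
  fixes h :: "real \<Rightarrow> real"
  assumes "\<not> (\<exists>D. DERIV h x :> D)"
  shows "deriv h x = deriv_default"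
proof -
  have "(\<lambda>D. DERIV h x :> D) = (\<lambda>D. False)" using assms by auto
  then show ?thesis unfolding deriv_def deriv_default_def by simp
qed

lemma differentiable_shift_iff:
  fixes g :: "real \<Rightarrow> real"
  shows "(\<exists>D. DERIV (\<lambda>r. g r - c) x :> D) \<longleftrightarrow> (\<exists>D. DERIV g x :> D)"
proof
  assume "\<exists>D. DERIV (\<lambda>r. g r - c) x :> D"
  then obtain D where "DERIV (\<lambda>r. g r - c) x :> D" by auto
  from DERIV_add[OF this DERIV_const[of c]] show "\<exists>D. DERIV g x :> D" by auto
next
  assume "\<exists>D. DERIV g x :> D"
  then obtain D where "DERIV g x :> D" by auto
  from DERIV_diff[OF this DERIV_const[of c]] show "\<exists>D. DERIV (\<lambda>r. g r - c) x :> D" by auto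
qed

lemma deriv_shift:
  fixes g :: "real \<Rightarrow> real"
  shows "deriv (\<lambda>r. g r - c) x = deriv g x"
proof (cases "\<exists>D. DERIV g x :> D")
  case True
  then obtain D where D: "DERIV g x :> D" by auto
  from DERIV_diff[OF this DERIV_const[of c]] have "DERIV (\<lambda>r. g r - c) x :> D" by simp
  then show ?thesis using D by (simp add: DERIV_imp_deriv)
next
  case False
  then show ?thesis
    using differentiable_shift_iff[of g c x] by (simp add: deriv_nondifferentiable)
qed

lemma differentiable_scale_iff:
  fixes g :: "real \<Rightarrow> real"
  assumes "c \<noteq> 0"
  shows "(\<exists>D. DERIV (\<lambda>r. c * g r) x :> D) \<longleftrightarrow> (\<exists>D. DERIV g x :> D)"
proof
  assume "\<exists>D. DERIV (\<lambda>r. c * g r) x :> D"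
  then obtain D where "DERIV (\<lambda>r. c * g r) x :> D" by auto
  from DERIV_cmult[OF this, of "1/c"] assms show "\<exists>D. DERIV g x :> D" by auto
next
  assume "\<exists>D. DERIV g x :> D"
  then obtain D where "DERIV g x :> D" by auto
  from DERIV_cmult[OF this, of c] show "\<exists>D. DERIV (\<lambda>r. c * g r) x :> D" by auto
qed

lemma deriv_scale:
  fixes g :: "real \<Rightarrow> real"
  assumes "c \<noteq> 0"
  shows "deriv (\<lambda>r. c * g r) x = (if \<exists>D. DERIV g x :> D then c * deriv g x else deriv g x)"
proof (cases "\<exists>D. DERIV g x :> D")
  case True
  then obtain D where D: "DERIV g x :> D" by auto
  from DERIV_cmult[OF this, of c] have "DERIV (\<lambda>r. c * g r) x :> c * D" by simp
  then show ?thesis using D True by (simp add: DERIV_imp_deriv)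
next
  case False
  then show ?thesis
    using differentiable_scale_iff[OF assms, of g x] by (simp add: deriv_nondifferentiable)
qed

section \<open>Measurability of derivatives\<close>

lemma le_from_rationals:
  fixes \<phi> :: "real \<Rightarrow> real"
  assumes cont: "\<And>y. y \<noteq> 0 \<Longrightarrow> isCont \<phi> y"
    and rat: "\<And>s::rat. s \<noteq> 0 \<Longrightarrow> \<bar>of_rat s\<bar> < d \<Longrightarrow> \<phi> (of_rat s) \<le> e"
    and y: "y \<noteq> 0" "\<bar>y\<bar> < d"
  shows "\<phi> y \<le> e"
proof (rule ccontr)
  assume "\<not> \<phi> y \<le> e"
  hence pos: "\<phi> y - e > 0" by simp
  from cont[OF y(1)] obtain \<delta> where \<delta>: "\<delta> > 0"
    "\<And>z. \<bar>z - y\<bar> < \<delta> \<Longrightarrow> \<bar>\<phi> z - \<phi> y\<bar> < \<phi> y - e"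
    using pos unfolding continuous_at_eps_delta dist_real_def by metis
  define m where "m = min \<delta> (min (d - \<bar>y\<bar>) \<bar>y\<bar>)"
  have m: "m > 0" using \<delta> y by (simp add: m_def)
  obtain r where r: "r \<in> \<rat>" "y < r" "r < y + m" using Rats_dense_in_real[of y "y+m"] m by auto
  then obtain s where s: "r = of_rat s" by (auto elim: Rats_cases)
  have "\<phi> r > e" using \<delta>(2)[of r] r m_def by fastforce
  moreover have "r \<noteq> 0" "\<bar>r\<bar> < d" using r y m_def by (cases "y > 0"; auto)+
  ultimately show False using rat[of s] s by fastforce
qed

text \<open>The limit of the forward difference quotients along the step sizes 1/(n+1), and the
  property that the difference quotients converge to it along rational step sizes; both
  are measurable in x, and together they determine deriv.\<close>
definition quotient_limit :: "(real \<Rightarrow> real) \<Rightarrow> real \<Rightarrow> real" where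
  "quotient_limit h x = lim (\<lambda>n. (h (x + 1 / real (Suc n)) - h x) * real (Suc n))"

definition rational_differentiable :: "(real \<Rightarrow> real) \<Rightarrow> real \<Rightarrow> bool" where
  "rational_differentiable h x \<longleftrightarrow> (\<forall>e::rat. e > 0 \<longrightarrow> (\<exists>d::rat. d > 0 \<and>
     (\<forall>s::rat. s \<noteq> 0 \<longrightarrow> \<bar>of_rat s\<bar> < (of_rat d :: real) \<longrightarrow>
        \<bar>(h (x + of_rat s) - h x) / of_rat s - quotient_limit h x\<bar> \<le> (of_rat e :: real))))"

lemma DERIV_imp_quotient_limit:
  assumes "DERIV h x :> D"
  shows "quotient_limit h x = D"
proof -
  have lim0: "((\<lambda>s. (h (x + s) - h x) / s) \<longlongrightarrow> D) (at 0)"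
    using assms unfolding DERIV_def by simp
  have "(\<lambda>n. 1 / real (Suc n)) \<longlonglongrightarrow> 0"
    using LIMSEQ_inverse_real_of_nat by (simp add: inverse_eq_divide)
  hence "filterlim (\<lambda>n. 1 / real (Suc n)) (at_right 0) sequentially"
    by (rule tendsto_imp_filterlim_at_right) simp
  hence "filterlim (\<lambda>n. 1 / real (Suc n)) (at 0) sequentially"
    by (rule filterlim_mono) (auto simp: at_le)
  from filterlim_compose[OF lim0 this]
  have "(\<lambda>n. (h (x + 1 / real (Suc n)) - h x) * real (Suc n)) \<longlonglongrightarrow> D" by simp
  then show ?thesis unfolding quotient_limit_def by (rule limI)
qed

lemma DERIV_imp_rational_differentiable:
  assumes D: "DERIV h x :> D"
  shows "rational_differentiable h x"
  unfolding rational_differentiable_def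
proof (intro allI impI)
  fix e :: rat assume "e > 0"
  hence "(of_rat e :: real) > 0" by simp
  then obtain d where d: "d > 0"
    "\<And>s. s \<noteq> 0 \<Longrightarrow> norm (s - 0) < d \<Longrightarrow> norm ((h (x + s) - h x) / s - D) < of_rat e"
    using D unfolding DERIV_def LIM_eq by (metis add_0)
  obtain r where r: "r \<in> \<rat>" "0 < r" "r < d" using Rats_dense_in_real[of 0 d] d by auto
  then obtain d' where d': "r = of_rat d'" by (auto elim: Rats_cases)
  show "\<exists>d::rat. d > 0 \<and> (\<forall>s::rat. s \<noteq> 0 \<longrightarrow> \<bar>of_rat s\<bar> < (of_rat d::real) \<longrightarrow>
      \<bar>(h (x + of_rat s) - h x) / of_rat s - quotient_limit h x\<bar> \<le> (of_rat e::real))"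
    using r d' d DERIV_imp_quotient_limit[OF D] by (intro exI[of _ d']) (auto intro!: less_imp_le)
qed

lemma rational_differentiable_imp_DERIV:
  assumes hc: "continuous_on UNIV h" and rd: "rational_differentiable h x"
  shows "DERIV h x :> quotient_limit h x"
proof -
  let ?L = "quotient_limit h x"
  have "((\<lambda>s. (h (x + s) - h x) / s) \<longlongrightarrow> ?L) (at 0)"
    unfolding LIM_eq
  proof (intro allI impI)
    fix r :: real assume "r > 0"
    then obtain e' where e': "e' \<in> \<rat>" "0 < e'" "e' < r" using Rats_dense_in_real[of 0 r] by auto
    then obtain e where e: "e' = of_rat e" by (auto elim: Rats_cases)
    then obtain d where d: "d > 0" "\<And>s::rat. s \<noteq> 0 \<Longrightarrow> \<bar>of_rat s\<bar> < (of_rat d::real) \<Longrightarrow>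
        \<bar>(h (x + of_rat s) - h x) / of_rat s - ?L\<bar> \<le> (of_rat e::real)"
      using rd e' unfolding rational_differentiable_def by force
    have cont: "isCont (\<lambda>y. \<bar>(h (x + y) - h x) / y - ?L\<bar>) y" if "y \<noteq> 0" for y
    proof -
      have "isCont (\<lambda>y. h (x + y)) y"
        using hc by (intro continuous_on_interior[of UNIV] continuous_on_compose2[OF hc])
          (auto intro!: continuous_intros)
      then show ?thesis using that by (intro continuous_intros) auto
    qed
    have "\<bar>(h (x + y) - h x) / y - ?L\<bar> \<le> of_rat e" if "y \<noteq> 0" "\<bar>y\<bar> < of_rat d" for y
      by (rule le_from_rationals[where \<phi> = "\<lambda>y. \<bar>(h (x + y) - h x) / y - ?L\<bar>"])
        (use cont d that in auto)
    then show "\<exists>s>0. \<forall>y. y \<noteq> 0 \<and> norm (y - 0) < s \<longrightarrow> norm ((h (x + y) - h x) / y - ?L) < r"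
      using d e e' by (intro exI[of _ "of_rat d"]) fastforce
  qed
  then show ?thesis unfolding DERIV_def by simp
qed

lemma deriv_eq_rational:
  assumes "continuous_on UNIV h"
  shows "deriv h = (\<lambda>x. if rational_differentiable h x then quotient_limit h x else deriv_default)"
proof
  fix x
  show "deriv h x = (if rational_differentiable h x then quotient_limit h x else deriv_default)"
  proof (cases "\<exists>D. DERIV h x :> D")
    case True
    then obtain D where D: "DERIV h x :> D" by auto
    then show ?thesis using DERIV_imp_rational_differentiable DERIV_imp_quotient_limit
      by (simp add: DERIV_imp_deriv)
  next
    case False
    then show ?thesis
      using rational_differentiable_imp_DERIV[OF assms] by (auto simp: deriv_nondifferentiable)
  qed
qed

lemma borel_measurable_deriv:
  fixes h :: "real \<Rightarrow> real"
  assumes hc: "continuous_on UNIV h"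
  shows "deriv h \<in> borel_measurable borel"
proof -
  have hm[measurable]: "h \<in> borel_measurable borel" using hc by (rule borel_measurable_continuous_onI)
  have hs[measurable]: "(\<lambda>x. h (x + c)) \<in> borel_measurable borel" for c
    by (intro borel_measurable_continuous_onI continuous_on_compose2[OF hc])
      (auto intro!: continuous_intros)
  have Lm[measurable]: "quotient_limit h \<in> borel_measurable borel"
    unfolding quotient_limit_def[abs_def] by (intro borel_measurable_lim_metric) measurable
  have "(\<lambda>x. \<bar>(h (x + of_rat s) - h x) / of_rat s - quotient_limit h x\<bar>) \<in> borel_measurable borel"
    for s by measurable
  hence [measurable]: "Measurable.pred borel (rational_differentiable h)"
    unfolding rational_differentiable_def[abs_def]
    by (intro pred_intros_countable pred_intros_imp' pred_intros_conj1')
      (auto simp: pred_def intro: borel_measurable_le[OF _ borel_measurable_const])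
  show ?thesis unfolding deriv_eq_rational[OF hc] by measurable
qed

abbreviation halfline :: "real measure" where
  "halfline \<equiv> lebesgue_on {0<..}"

lemma halfline_sets[simp]: "{0<..} \<in> sets (lebesgue :: real measure)"
  by (simp add: sets_completionI_sets)

lemma set_integral_halfline:
  "set_lebesgue_integral lebesgue {0<..} (h :: real \<Rightarrow> real) = integral\<^sup>L halfline h"
  unfolding set_lebesgue_integral_def by (subst integral_restrict_space) auto

lemma nn_integral_halfline: "(\<integral>\<^sup>+ r\<in>{0<..}. h r \<partial>lebesgue) = nn_integral halfline h"
  by (subst nn_integral_restrict_space) auto

lemma measurable_ident_lebesgue_on[measurable]: "(\<lambda>x::real. x) \<in> borel_measurable (lebesgue_on S)"
  using id_borel_measurable_lebesgue_on[of S] by (simp add: id_def)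

lemma measurable_halfline_continuous:
  "continuous_on {0<..} h \<Longrightarrow> h \<in> borel_measurable halfline"
  by (rule continuous_imp_measurable_on_sets_lebesgue) auto

text \<open>Continuity on the open half-line suffices: on each (1/(n+1),\<infinity>) the derivative agrees
  with that of a continuous function on the whole line.\<close>
lemma measurable_halfline_deriv:
  fixes h :: "real \<Rightarrow> real"
  assumes hc: "continuous_on {0<..} h"
  shows "deriv h \<in> borel_measurable halfline"
proof (rule measurable_piecewise_restrict2[where A = "\<lambda>n. {1 / real (Suc n)<..}"])
  show "{1 / real (Suc n)<..} \<in> sets halfline" for n
    by (auto simp: sets_restrict_space_iff sets_completionI_sets)
  show "space halfline = (\<Union>n. {1 / real (Suc n)<..})"
  proof (auto simp: space_restrict_space)
    fix x :: real assume "x > 0"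
    then obtain n where "inverse (real (Suc n)) < x" using reals_Archimedean by blast
    then show "\<exists>n. 1 / (1 + real n) < x" by (auto simp: inverse_eq_divide)
  next
    fix x :: real and n assume "1 / (1 + real n) < x"
    moreover have "0 < 1 / (1 + real n)" by simp
    ultimately show "0 < x" by linarith
  qed
  fix n :: nat
  define b where "b = 1 / real (Suc n)"
  have b: "b > 0" by (simp add: b_def)
  define hn where "hn x = h (max x b)" for x
  have "continuous_on UNIV hn" unfolding hn_def
  proof (rule continuous_on_compose2[of "{b..}" h UNIV "\<lambda>x. max x b"])
    show "continuous_on {b..} h" by (rule continuous_on_subset[OF hc]) (use b in auto)
  qed (auto intro!: continuous_intros)
  hence m: "deriv hn \<in> borel_measurable halfline"
    using measurable_comp[OF id_borel_measurable_lebesgue_on borel_measurable_deriv]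
    by (simp add: o_def id_def)
  have "deriv h x = deriv hn x" if "x \<in> {b<..}" for x
  proof (rule deriv_cong_ev)
    have "eventually (\<lambda>y. y \<in> {b<..}) (nhds x)" using that by (intro eventually_nhds_in_open) auto
    then show "eventually (\<lambda>y. h y = hn y) (nhds x)" by eventually_elim (auto simp: hn_def)
  qed simp
  then show "\<exists>g\<in>borel_measurable halfline. \<forall>x\<in>{1 / real (Suc n)<..}. deriv h x = g x"
    using m unfolding b_def by blast
qed

section \<open>Absolute continuity\<close>

lemma abs_cont_on_single:
  assumes "abs_cont_on c d H" "\<epsilon> > 0"
  shows "\<exists>\<delta>>0. \<forall>x y. c \<le> x \<longrightarrow> x \<le> y \<longrightarrow> y \<le> d \<longrightarrow> y - x < \<delta> \<longrightarrow> \<bar>H y - H x\<bar> < \<epsilon>"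
proof -
  obtain \<delta> where \<delta>: "\<delta> > 0" and P: "\<forall>(n::nat) (xs::nat \<Rightarrow> real) ys.
      (\<forall>i<n. c \<le> xs i \<and> xs i \<le> ys i \<and> ys i \<le> d) \<and>
      (\<forall>i<n. \<forall>j<n. i \<noteq> j \<longrightarrow> ys i \<le> xs j \<or> ys j \<le> xs i) \<and>
      (\<Sum>i<n. ys i - xs i) < \<delta> \<longrightarrow> (\<Sum>i<n. \<bar>H (ys i) - H (xs i)\<bar>) < \<epsilon>"
    using assms unfolding abs_cont_on_def by blast
  have "\<bar>H y - H x\<bar> < \<epsilon>" if "c \<le> x" "x \<le> y" "y \<le> d" "y - x < \<delta>" for x y
    using P[rule_format, of 1 "\<lambda>_. x" "\<lambda>_. y"] that by simp
  with \<delta> show ?thesis by blast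
qed

lemma loc_abs_cont_continuous:
  assumes "loc_abs_cont H"
  shows "continuous_on {0<..} H"
proof (intro continuous_at_imp_continuous_on ballI)
  fix x :: real assume "x \<in> {0<..}"
  hence x: "x > 0" by simp
  have ac: "abs_cont_on (x/2) (2*x) H" using assms x unfolding loc_abs_cont_def by auto
  show "isCont H x" unfolding continuous_at_eps_delta
  proof (intro allI impI)
    fix e :: real assume "e > 0"
    then obtain \<delta> where \<delta>: "\<delta> > 0" and P: "\<And>u v. x/2 \<le> u \<Longrightarrow> u \<le> v \<Longrightarrow> v \<le> 2*x \<Longrightarrow> v - u < \<delta> \<Longrightarrow>
        \<bar>H v - H u\<bar> < e"
      using abs_cont_on_single[OF ac] by metis
    have "dist (H y) (H x) < e" if "dist y x < min \<delta> (x/2)" for y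
      using P[of x y] P[of y x] that x by (cases "x \<le> y") (auto simp: dist_real_def abs_minus_commute)
    then show "\<exists>d>0. \<forall>y. dist y x < d \<longrightarrow> dist (H y) (H x) < e"
      using \<delta> x by (intro exI[of _ "min \<delta> (x/2)"]) auto
  qed
qed

lemma loc_abs_cont_shift: "loc_abs_cont g \<Longrightarrow> loc_abs_cont (\<lambda>r. g r - c)"
  unfolding loc_abs_cont_def abs_cont_on_def by simp

lemma loc_abs_cont_scale:
  assumes "loc_abs_cont g" "(c::real) \<noteq> 0"
  shows "loc_abs_cont (\<lambda>r. c * g r)"
  unfolding loc_abs_cont_def abs_cont_on_def
proof (intro allI impI)
  fix u v e :: real assume uv: "0 < u" "u \<le> v" and e: "e > 0"
  have "e / \<bar>c\<bar> > 0" using e assms(2) by simp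
  then obtain \<delta> where \<delta>: "\<delta> > 0" "\<forall>(n::nat) (x::nat \<Rightarrow> real) y.
        (\<forall>i<n. u \<le> x i \<and> x i \<le> y i \<and> y i \<le> v) \<and>
        (\<forall>i<n. \<forall>j<n. i \<noteq> j \<longrightarrow> y i \<le> x j \<or> y j \<le> x i) \<and>
        (\<Sum>i<n. y i - x i) < \<delta> \<longrightarrow> (\<Sum>i<n. \<bar>g (y i) - g (x i)\<bar>) < e / \<bar>c\<bar>"
    using assms(1) uv unfolding loc_abs_cont_def abs_cont_on_def by blast
  have "(\<Sum>i<n. \<bar>c * g (y i) - c * g (x i)\<bar>) = \<bar>c\<bar> * (\<Sum>i<n. \<bar>g (y i) - g (x i)\<bar>)"
    for n and x y :: "nat \<Rightarrow> real"
    by (simp add: sum_distrib_left abs_mult right_diff_distrib[symmetric])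
  with \<delta> assms(2) show "\<exists>\<delta>>0. \<forall>(n::nat) (x::nat \<Rightarrow> real) y.
        (\<forall>i<n. u \<le> x i \<and> x i \<le> y i \<and> y i \<le> v) \<and>
        (\<forall>i<n. \<forall>j<n. i \<noteq> j \<longrightarrow> y i \<le> x j \<or> y j \<le> x i) \<and>
        (\<Sum>i<n. y i - x i) < \<delta> \<longrightarrow> (\<Sum>i<n. \<bar>c * g (y i) - c * g (x i)\<bar>) < e"
    by (intro exI[of _ \<delta>]) (auto simp: field_simps)
qed

section \<open>The energy densities\<close>

text \<open>The integrand of the bilinear form appearing in the constraint defining C_q;
  on the diagonal it is the density dens2.\<close>
definition pairing :: "(real \<Rightarrow> real) \<Rightarrow> (real \<Rightarrow> real) \<Rightarrow> (real \<Rightarrow> real) \<Rightarrow> real \<Rightarrow> real" where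
  "pairing a u v r = r^2 * deriv u r * deriv v r + 2 * a r ^ 2 * u r * v r"

lemma dens1_nonneg: "\<kappa> \<ge> 0 \<Longrightarrow> dens1 \<kappa> a f r \<ge> 0"
  unfolding dens1_def by (intro add_nonneg_nonneg mult_nonneg_nonneg) auto

lemma dens2_nonneg: "dens2 a g r \<ge> 0"
  unfolding dens2_def by (intro add_nonneg_nonneg mult_nonneg_nonneg) auto

lemma dens1_measurable:
  assumes [measurable]: "a \<in> borel_measurable halfline" "f \<in> borel_measurable halfline"
    "deriv a \<in> borel_measurable halfline" "deriv f \<in> borel_measurable halfline"
  shows "dens1 \<kappa> a f \<in> borel_measurable halfline"
  unfolding dens1_def[abs_def] by measurable

lemma dens2_measurable:
  assumes [measurable]: "a \<in> borel_measurable halfline" "g \<in> borel_measurable halfline"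
    "deriv g \<in> borel_measurable halfline"
  shows "dens2 a g \<in> borel_measurable halfline"
  unfolding dens2_def[abs_def] by measurable

lemma pairing_bound: "\<bar>pairing a u v r\<bar> \<le> dens2 a u r + dens2 a v r"
proof -
  have sq: "2 * \<bar>x * y\<bar> \<le> x^2 + y^2" for x y :: real
    using sum_squares_bound[of "\<bar>x\<bar>" "\<bar>y\<bar>"] by (simp add: abs_mult power2_abs)
  have 1: "2 * \<bar>(r * deriv u r) * (r * deriv v r)\<bar> \<le> r^2 * (deriv u r)^2 + r^2 * (deriv v r)^2"
    using sq[of "r * deriv u r" "r * deriv v r"] by (simp add: power_mult_distrib)
  have 2: "(a r)^2 * (2 * \<bar>u r * v r\<bar>) \<le> (a r)^2 * (u r)^2 + (a r)^2 * (v r)^2"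
    using mult_left_mono[OF sq[of "u r" "v r"] zero_le_power2[of "a r"]] by (simp add: algebra_simps)
  have "\<bar>pairing a u v r\<bar> \<le> \<bar>(r * deriv u r) * (r * deriv v r)\<bar> + (a r)^2 * (2 * \<bar>u r * v r\<bar>)"
    unfolding pairing_def
    by (rule order_trans[OF abs_triangle_ineq]) (simp add: abs_mult power2_eq_square algebra_simps)
  moreover have "0 \<le> r^2 * (deriv u r)^2" "0 \<le> r^2 * (deriv v r)^2"
    "0 \<le> (a r)^2 * (u r)^2" "0 \<le> (a r)^2 * (v r)^2"
    by simp_all
  ultimately show ?thesis using 1 2 unfolding dens2_def by linarith
qed

lemma dens2_scale_le:
  assumes "c \<noteq> 0"
  shows "dens2 a (\<lambda>r. c * G r) r \<le> max 1 (c^2) * dens2 a G r"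
proof -
  have "(deriv (\<lambda>r. c * G r) r)^2 \<le> max 1 (c^2) * (deriv G r)^2"
    using deriv_scale[OF assms, of G r] mult_right_mono[of 1 "max 1 (c^2)" "(deriv G r)^2"]
      mult_right_mono[of "c^2" "max 1 (c^2)" "(deriv G r)^2"]
    by (auto simp: power_mult_distrib)
  hence "r^2 * (deriv (\<lambda>r. c * G r) r)^2 \<le> r^2 * (max 1 (c^2) * (deriv G r)^2)"
    by (intro mult_left_mono) auto
  moreover have "2 * (a r)^2 * (c * G r)^2 \<le> max 1 (c^2) * (2 * (a r)^2 * (G r)^2)"
    by (simp add: power_mult_distrib mult_right_mono mult.left_commute)
  ultimately show ?thesis unfolding dens2_def by (simp add: algebra_simps)
qed

text \<open>Doubling the second argument of the pairing acts linearly except where that argument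
  is not differentiable, because there deriv returns the default value.\<close>
lemma pairing_double_defect:
  "2 * pairing a u v r - pairing a u (\<lambda>r. 2 * v r) r =
     (if \<exists>D. DERIV v r :> D then 0 else r^2 * deriv u r * deriv_default)"
proof (cases "\<exists>D. DERIV v r :> D")
  case True
  then show ?thesis using deriv_scale[of 2 v r] by (simp add: pairing_def algebra_simps)
next
  case False
  then show ?thesis using deriv_scale[of 2 v r] deriv_nondifferentiable[OF False]
    by (simp add: pairing_def algebra_simps)
qed

lemma nn_integral_finite_of_integrable:
  "integrable halfline h \<Longrightarrow> (\<And>r. 0 \<le> h r) \<Longrightarrow> nn_integral halfline (\<lambda>r. ennreal (h r)) < \<infinity>"
  by (subst nn_integral_eq_integral) auto

locale constrained_triple =
  fixes \<kappa> \<omega> q :: real and a f g :: "real \<Rightarrow> real"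
  assumes kappa_pos: "\<kappa> > 0" and q_pos: "q > 0" and mem: "(a, f, g) \<in> constrained \<kappa> \<omega> q"
begin

lemma admissible: "(a, f, g) \<in> admissible \<kappa> \<omega> q"
  using mem unfolding constrained_def by auto

lemma continuous_halfline:
  "continuous_on {0<..} a" "continuous_on {0<..} f" "continuous_on {0<..} g"
  using admissible unfolding admissible_def by (auto intro: continuous_on_subset)

lemma g_loc_abs_cont: "loc_abs_cont g"
  and g_limit: "(g \<longlongrightarrow> q) at_top"
  and a_continuous: "continuous_on {0..} a"
  using admissible unfolding admissible_def by auto

lemma measurable[measurable]:
  "a \<in> borel_measurable halfline" "f \<in> borel_measurable halfline" "g \<in> borel_measurable halfline"
  "deriv a \<in> borel_measurable halfline" "deriv f \<in> borel_measurable halfline"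
  "deriv g \<in> borel_measurable halfline"
  using continuous_halfline
  by (auto intro: measurable_halfline_continuous measurable_halfline_deriv)

lemma measurable_dens[measurable]:
  "dens1 \<kappa> a f \<in> borel_measurable halfline" "dens2 a g \<in> borel_measurable halfline"
  by (auto intro: dens1_measurable dens2_measurable)

lemma integrable_dens: "integrable halfline (dens1 \<kappa> a f)" "integrable halfline (dens2 a g)"
proof -
  have "nn_integral halfline (\<lambda>r. ennreal (dens1 \<kappa> a f r + dens2 a g r)) < \<infinity>"
    using admissible unfolding admissible_def energy_def nn_integral_halfline by auto
  hence sum: "integrable halfline (\<lambda>r. dens1 \<kappa> a f r + dens2 a g r)"
    using kappa_pos dens1_nonneg dens2_nonneg by (intro integrableI_nonneg) (auto intro!: add_nonneg_nonneg)
  show "integrable halfline (dens1 \<kappa> a f)" "integrable halfline (dens2 a g)"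
    by (auto intro: Bochner_Integration.integrable_bound[OF sum]
        simp: dens1_nonneg[of \<kappa>] dens2_nonneg kappa_pos less_imp_le)
qed

lemma Lfun_split: "Lfun \<kappa> a f g = integral\<^sup>L halfline (dens1 \<kappa> a f) - integral\<^sup>L halfline (dens2 a g)"
  unfolding Lfun_def set_integral_halfline using integrable_dens by simp

lemma constraint_energy:
  assumes "loc_abs_cont G" "(G \<longlongrightarrow> 0) at_top" "energy2 a G < \<infinity>"
  shows "integral\<^sup>L halfline (pairing a g G) = 0"
  using mem assms unfolding constrained_def set_integral_halfline pairing_def[abs_def] by auto

lemma constraint:
  assumes "loc_abs_cont G" "(G \<longlongrightarrow> 0) at_top" "integrable halfline (dens2 a G)"
  shows "integral\<^sup>L halfline (pairing a g G) = 0"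
proof (rule constraint_energy[OF assms(1,2)])
  show "energy2 a G < \<infinity>"
    unfolding energy2_def nn_integral_halfline
    by (intro nn_integral_finite_of_integrable assms dens2_nonneg)
qed

text \<open>a^2 is integrable: near 0 since a is bounded there, near \<infinity> since g > q/2 there
  and a^2 g^2 is part of dens2.\<close>
lemma integrable_a_sq: "integrable halfline (\<lambda>r. (a r)^2)"
proof -
  obtain N where N: "\<And>r. r \<ge> N \<Longrightarrow> g r > q/2"
    using order_tendstoD(1)[OF g_limit, of "q/2"] q_pos unfolding eventually_at_top_linorder by auto
  define R where "R = max N 1"
  have R: "R > 0" "\<And>r. r \<ge> R \<Longrightarrow> g r > q/2" using N by (auto simp: R_def)
  have "bounded (a ` {0..R})"
    by (intro compact_imp_bounded compact_continuous_image continuous_on_subset[OF a_continuous]) auto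
  then obtain B where "\<forall>x\<in>a ` {0..R}. norm x \<le> B" unfolding bounded_iff by blast
  hence B: "\<And>r. r \<in> {0..R} \<Longrightarrow> \<bar>a r\<bar> \<le> B" by auto
  define \<phi> where "\<phi> r = B^2 * indicator {0<..R} r + 2/q^2 * dens2 a g r" for r
  have "emeasure halfline {0<..R} = emeasure lborel {0<..R}"
    by (subst emeasure_restrict_space) (auto simp: emeasure_completion)
  hence "integrable halfline (indicator {0<..R} :: real \<Rightarrow> real)"
    using R by (intro integrable_real_indicator) (auto simp: sets_restrict_space_iff sets_completionI_sets)
  hence integrable_\<phi>: "integrable halfline \<phi>" unfolding \<phi>_def using integrable_dens by auto
  have "(a r)^2 \<le> \<phi> r" if r: "r > 0" for r
  proof (cases "r \<le> R")
    case True
    have "\<bar>a r\<bar> \<le> B" using B[of r] True r by simp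
    hence "(a r)^2 \<le> B^2" by (metis abs_ge_zero abs_le_square_iff abs_of_nonneg order_trans)
    moreover have "0 \<le> 2/q^2 * dens2 a g r" using dens2_nonneg[of a g r] by simp
    ultimately show ?thesis using True r by (simp add: \<phi>_def)
  next
    case False
    have "q^2 \<le> 4 * (g r)^2"
      using power_mono[of "q/2" "g r" 2] R(2)[of r] False q_pos by (simp add: power_divide)
    hence "(a r)^2 * q^2 \<le> (a r)^2 * (4 * (g r)^2)" by (intro mult_left_mono) auto
    hence "(a r)^2 \<le> 2/q^2 * (2 * (a r)^2 * (g r)^2)" using q_pos by (simp add: field_simps)
    also have "\<dots> \<le> 2/q^2 * dens2 a g r" by (intro mult_left_mono) (auto simp: dens2_def)
    finally show ?thesis using False by (simp add: \<phi>_def)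
  qed
  then show ?thesis
    by (intro Bochner_Integration.integrable_bound[OF integrable_\<phi>] AE_I2)
      (auto intro: order_trans[OF _ abs_ge_self])
qed

lemma integrable_a_sq_g: "integrable halfline (\<lambda>r. (a r)^2 * g r)"
proof (rule Bochner_Integration.integrable_bound)
  show "integrable halfline (\<lambda>r. (a r)^2 + dens2 a g r)"
    using integrable_a_sq integrable_dens by auto
  have "\<bar>(a r)^2 * g r\<bar> \<le> (a r)^2 + dens2 a g r" for r
  proof -
    have "2 * \<bar>g r\<bar> \<le> 1 + (g r)^2"
      using sum_squares_bound[of 1 "\<bar>g r\<bar>"] by (simp add: power2_abs)
    hence "\<bar>g r\<bar> \<le> 1 + 2 * (g r)^2" using zero_le_power2[of "g r"] by linarith
    hence "\<bar>(a r)^2 * g r\<bar> \<le> (a r)^2 * (1 + 2 * (g r)^2)"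
      by (simp add: abs_mult mult_left_mono)
    also have "\<dots> = (a r)^2 + 2 * (a r)^2 * (g r)^2" by (simp add: algebra_simps)
    also have "\<dots> \<le> (a r)^2 + dens2 a g r" by (simp add: dens2_def)
    finally show ?thesis .
  qed
  then show "AE r in halfline. norm ((a r)^2 * g r) \<le> norm ((a r)^2 + dens2 a g r)"
    using dens2_nonneg[of a g] by (intro AE_I2) simp
qed measurable

lemma shifted_test_function:
  "loc_abs_cont (\<lambda>r. g r - q)" "((\<lambda>r. g r - q) \<longlongrightarrow> 0) at_top"
  "integrable halfline (dens2 a (\<lambda>r. g r - q))"
proof -
  have "dens2 a (\<lambda>r. g r - q) = (\<lambda>r. dens2 a g r - 4 * q * ((a r)^2 * g r) + 2 * q^2 * (a r)^2)"
    by (rule ext) (simp add: dens2_def deriv_shift power2_eq_square algebra_simps)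
  then show "integrable halfline (dens2 a (\<lambda>r. g r - q))"
    using integrable_dens integrable_a_sq_g integrable_a_sq by auto
  show "loc_abs_cont (\<lambda>r. g r - q)" by (rule loc_abs_cont_shift[OF g_loc_abs_cont])
  show "((\<lambda>r. g r - q) \<longlongrightarrow> 0) at_top" using tendsto_diff[OF g_limit tendsto_const[of q]] by simp
qed

lemma dens2_integral_charge: "integral\<^sup>L halfline (dens2 a g) = q * charge a g"
proof -
  have "pairing a g (\<lambda>r. g r - q) = (\<lambda>r. dens2 a g r - 2 * q * ((a r)^2 * g r))"
    unfolding pairing_def dens2_def deriv_shift by (rule ext) (simp add: power2_eq_square algebra_simps)
  with constraint[OF shifted_test_function]
  have "integral\<^sup>L halfline (dens2 a g) - 2 * q * integral\<^sup>L halfline (\<lambda>r. (a r)^2 * g r) = 0"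
    using integrable_dens integrable_a_sq_g by simp
  then show ?thesis unfolding charge_def set_integral_halfline by simp
qed

lemma integrable_dens2_scale:
  assumes c: "c \<noteq> 0" and lG: "loc_abs_cont G" and iG: "integrable halfline (dens2 a G)"
  shows "integrable halfline (dens2 a (\<lambda>r. c * G r))"
proof (rule Bochner_Integration.integrable_bound)
  show "integrable halfline (\<lambda>r. max 1 (c^2) * dens2 a G r)" using iG by auto
  have "continuous_on {0<..} (\<lambda>r. c * G r)"
    using loc_abs_cont_continuous[OF lG] by (intro continuous_intros)
  then show "dens2 a (\<lambda>r. c * G r) \<in> borel_measurable halfline"
    by (intro dens2_measurable measurable measurable_halfline_continuous measurable_halfline_deriv)
  show "AE r in halfline. norm (dens2 a (\<lambda>r. c * G r) r) \<le> norm (max 1 (c^2) * dens2 a G r)"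
    using dens2_scale_le[OF c] dens2_nonneg[of a "\<lambda>r. c * G r"] dens2_nonneg[of a G]
    by (intro AE_I2) simp
qed

lemma integrable_pairing:
  assumes lG: "loc_abs_cont G" and iG: "integrable halfline (dens2 a G)"
  shows "integrable halfline (pairing a g G)"
proof (rule Bochner_Integration.integrable_bound)
  show "integrable halfline (\<lambda>r. dens2 a g r + dens2 a G r)" using integrable_dens iG by auto
  have [measurable]: "G \<in> borel_measurable halfline" "deriv G \<in> borel_measurable halfline"
    using loc_abs_cont_continuous[OF lG]
    by (auto intro: measurable_halfline_continuous measurable_halfline_deriv)
  show "pairing a g G \<in> borel_measurable halfline" unfolding pairing_def[abs_def] by measurable
  show "AE r in halfline. norm (pairing a g G r) \<le> norm (dens2 a g r + dens2 a G r)"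
    using pairing_bound[of a g G] dens2_nonneg[of a g] dens2_nonneg[of a G]
    by (intro AE_I2) (simp add: add_nonneg_nonneg)
qed

text \<open>If the default derivative value is nonzero, g is differentiable almost everywhere:
  for G = g - q the defect 2 pairing(g,G) - pairing(g,2G) has integral zero by the constraint,
  is nonnegative, and equals r^2 deriv_default^2 wherever g is not differentiable.\<close>
lemma ae_differentiable:
  assumes nz: "deriv_default \<noteq> 0"
  shows "AE r in halfline. \<exists>D. DERIV g r :> D"
proof -
  define G where "G r = g r - q" for r
  have lG: "loc_abs_cont G" and tG: "(G \<longlongrightarrow> 0) at_top" and iG: "integrable halfline (dens2 a G)"
    using shifted_test_function unfolding G_def[abs_def] by auto
  have lG2: "loc_abs_cont (\<lambda>r. 2 * G r)" and tG2: "((\<lambda>r. 2 * G r) \<longlongrightarrow> 0) at_top"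
    and iG2: "integrable halfline (dens2 a (\<lambda>r. 2 * G r))"
    using loc_abs_cont_scale[OF lG] tendsto_mult[OF tendsto_const[of 2] tG]
      integrable_dens2_scale[OF _ lG iG] by auto
  define \<psi> where "\<psi> r = 2 * pairing a g G r - pairing a g (\<lambda>r. 2 * G r) r" for r
  have \<psi>: "\<psi> r = (if \<exists>D. DERIV g r :> D then 0 else r^2 * deriv_default^2)" for r
  proof -
    have "(\<exists>D. DERIV G r :> D) \<longleftrightarrow> (\<exists>D. DERIV g r :> D)"
      unfolding G_def[abs_def] by (rule differentiable_shift_iff)
    then show ?thesis unfolding \<psi>_def pairing_double_defect
      by (auto simp: deriv_nondifferentiable power2_eq_square)
  qed
  have integrable_\<psi>: "integrable halfline \<psi>"
    unfolding \<psi>_def[abs_def] using integrable_pairing[OF lG iG] integrable_pairing[OF lG2 iG2] by auto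
  have "integral\<^sup>L halfline \<psi>
      = 2 * integral\<^sup>L halfline (pairing a g G) - integral\<^sup>L halfline (pairing a g (\<lambda>r. 2 * G r))"
    unfolding \<psi>_def[abs_def] using integrable_pairing[OF lG iG] integrable_pairing[OF lG2 iG2] by simp
  also have "\<dots> = 0" using constraint[OF lG tG iG] constraint[OF lG2 tG2 iG2] by simp
  finally have "AE r in halfline. \<psi> r = 0"
    using integral_nonneg_eq_0_iff_AE[OF integrable_\<psi>] by (simp add: \<psi>)
  then show ?thesis
    by (rule AE_mp[OF _ AE_I2]) (use nz in \<open>auto simp: \<psi> split: if_splits\<close>)
qed

lemma ae_deriv_scale:
  assumes c: "c \<noteq> 0"
  shows "AE r in halfline. deriv (\<lambda>r. c * g r) r = c * deriv g r"
proof (cases "deriv_default = 0")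
  case True
  then show ?thesis using deriv_scale[OF c, of g] by (intro AE_I2) (auto simp: deriv_nondifferentiable)
next
  case False
  from ae_differentiable[OF False] show ?thesis
    by (rule AE_mp[OF _ AE_I2]) (use deriv_scale[OF c, of g] in auto)
qed

lemma measurable_scaled_g:
  "(\<lambda>r. c * g r) \<in> borel_measurable halfline" "deriv (\<lambda>r. c * g r) \<in> borel_measurable halfline"
proof -
  have "continuous_on {0<..} (\<lambda>r. c * g r)" using continuous_halfline by (intro continuous_intros)
  then show "(\<lambda>r. c * g r) \<in> borel_measurable halfline" "deriv (\<lambda>r. c * g r) \<in> borel_measurable halfline"
    by (auto intro: measurable_halfline_continuous measurable_halfline_deriv)
qed

lemma dens2_integral_scale:
  assumes c: "c \<noteq> 0"
  shows "integral\<^sup>L halfline (dens2 a (\<lambda>r. c * g r)) = c^2 * integral\<^sup>L halfline (dens2 a g)"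
proof -
  note measurable_scaled_g[measurable]
  have "integral\<^sup>L halfline (dens2 a (\<lambda>r. c * g r)) = integral\<^sup>L halfline (\<lambda>r. c^2 * dens2 a g r)"
    by (rule integral_cong_AE)
      (use ae_deriv_scale[OF c] in \<open>auto intro: dens2_measurable elim!: AE_mp[OF _ AE_I2]
          simp: dens2_def power_mult_distrib algebra_simps\<close>)
  then show ?thesis by simp
qed

lemma Lfun_scale:
  assumes c: "c \<noteq> 0"
  shows "Lfun \<kappa> a f (\<lambda>r. c * g r) = integral\<^sup>L halfline (dens1 \<kappa> a f) - c^2 * integral\<^sup>L halfline (dens2 a g)"
  unfolding Lfun_def set_integral_halfline
  using Bochner_Integration.integral_diff[OF integrable_dens(1)
      integrable_dens2_scale[OF c g_loc_abs_cont integrable_dens(2)]] dens2_integral_scale[OF c]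
  by simp

text \<open>The constraint is homogeneous in g: it holds for c g, written out as in C_{cq}.\<close>
lemma constraint_scale:
  assumes c: "c \<noteq> 0" and lG: "loc_abs_cont G" and tG: "(G \<longlongrightarrow> 0) at_top"
    and eG: "energy2 a G < \<infinity>"
  shows "integral\<^sup>L halfline
      (\<lambda>r. r^2 * deriv (\<lambda>r. c * g r) r * deriv G r + 2 * a r ^ 2 * (c * g r) * G r) = 0"
proof -
  note measurable_scaled_g[measurable]
  have [measurable]: "G \<in> borel_measurable halfline" "deriv G \<in> borel_measurable halfline"
    using loc_abs_cont_continuous[OF lG]
    by (auto intro: measurable_halfline_continuous measurable_halfline_deriv)
  have "integral\<^sup>L halfline
      (\<lambda>r. r^2 * deriv (\<lambda>r. c * g r) r * deriv G r + 2 * a r ^ 2 * (c * g r) * G r)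
    = integral\<^sup>L halfline (\<lambda>r. c * pairing a g G r)"
  proof (rule integral_cong_AE)
    show "AE r in halfline. r^2 * deriv (\<lambda>r. c * g r) r * deriv G r + 2 * a r ^ 2 * (c * g r) * G r
        = c * pairing a g G r"
      using ae_deriv_scale[OF c] by (rule AE_mp[OF _ AE_I2]) (auto simp: pairing_def algebra_simps)
    show "(\<lambda>r. c * pairing a g G r) \<in> borel_measurable halfline"
      unfolding pairing_def by measurable
  qed measurable
  also have "\<dots> = 0" using constraint_energy[OF lG tG eG] by simp
  finally show ?thesis .
qed

lemma admissible_scale:
  assumes c: "c \<noteq> 0"
  shows "(a, f, \<lambda>r. c * g r) \<in> admissible \<kappa> \<omega> (c * q)"
proof -
  note measurable_scaled_g[measurable]
  have "energy \<kappa> a f (\<lambda>r. c * g r) < \<infinity>"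
    unfolding energy_def nn_integral_halfline
    using kappa_pos integrable_dens integrable_dens2_scale[OF c g_loc_abs_cont]
    by (intro nn_integral_finite_of_integrable add_nonneg_nonneg dens1_nonneg dens2_nonneg
        Bochner_Integration.integrable_add) auto
  then show ?thesis
    using admissible loc_abs_cont_scale[OF g_loc_abs_cont c] tendsto_mult[OF tendsto_const[of c] g_limit]
    unfolding admissible_def by (auto intro!: continuous_intros)
qed

lemma scale_constrained:
  assumes "c > 0"
  shows "(a, f, \<lambda>r. c * g r) \<in> constrained \<kappa> \<omega> (c * q)"
proof -
  have "c \<noteq> 0" using assms by simp
  then show ?thesis
    using admissible_scale constraint_scale unfolding constrained_def set_integral_halfline by auto
qed

end

section \<open>The comparison argument\<close>

lemma rescaling_comparison:
  fixes D1 D2 :: "real \<Rightarrow> real"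
  assumes cmp: "\<And>q q'. 0 < q \<Longrightarrow> q \<le> q0 \<Longrightarrow> 0 < q' \<Longrightarrow> q' \<le> q0 \<Longrightarrow>
      D1 q' - D2 q' \<le> D1 q - (q'/q)^2 * D2 q"
    and q: "0 < q" "q \<le> q0"
  shows "D2 q / q^2 \<le> D2 q0 / q0^2"
proof (cases "q = q0")
  case False
  hence lt: "q < q0" using q by simp
  have "D1 q - D2 q \<le> D1 q0 - (q/q0)^2 * D2 q0" and "D1 q0 - D2 q0 \<le> D1 q - (q0/q)^2 * D2 q"
    by (rule cmp; use q lt in simp)+
  hence "(q0/q)^2 * D2 q - D2 q \<le> D2 q0 - (q/q0)^2 * D2 q0" by linarith
  moreover have "(q0/q)^2 * D2 q - D2 q = (q0^2 - q^2) * (D2 q / q^2)"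
    and "D2 q0 - (q/q0)^2 * D2 q0 = (q0^2 - q^2) * (D2 q0 / q0^2)"
    using q lt by (simp_all add: power_divide field_simps)
  moreover have "0 < q0^2 - q^2" using lt q by (simp add: power_strict_mono)
  ultimately show ?thesis by (metis mult_left_le_imp_le)
qed simp

lemma minimizer_charge_bound:
  assumes T: "\<And>q. 0 < q \<Longrightarrow> q \<le> q0 \<Longrightarrow> constrained_triple \<kappa> \<omega> q (a q) (f q) (g q)"
    and minimal: "\<And>q a' f' g'. 0 < q \<Longrightarrow> q \<le> q0 \<Longrightarrow> (a', f', g') \<in> constrained \<kappa> \<omega> q \<Longrightarrow>
           Lfun \<kappa> (a q) (f q) (g q) \<le> Lfun \<kappa> a' f' g'"
    and q: "0 < q" "q \<le> q0"
  shows "0 \<le> charge (a q) (g q) \<and>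
    charge (a q) (g q) \<le> q * (integral\<^sup>L halfline (dens2 (a q0) (g q0)) / q0^2)"
proof -
  define D1 where "D1 q = integral\<^sup>L halfline (dens1 \<kappa> (a q) (f q))" for q
  define D2 where "D2 q = integral\<^sup>L halfline (dens2 (a q) (g q))" for q
  have "D1 q' - D2 q' \<le> D1 p - (q'/p)^2 * D2 p"
    if p: "0 < p" "p \<le> q0" and q': "0 < q'" "q' \<le> q0" for p q'
  proof -
    interpret P: constrained_triple \<kappa> \<omega> p "a p" "f p" "g p" by (rule T[OF p])
    have "(a p, f p, \<lambda>r. q'/p * g p r) \<in> constrained \<kappa> \<omega> q'"
      using P.scale_constrained[of "q'/p"] p q' by simp
    hence "Lfun \<kappa> (a q') (f q') (g q') \<le> Lfun \<kappa> (a p) (f p) (\<lambda>r. q'/p * g p r)"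
      by (rule minimal[OF q'])
    also have "\<dots> = D1 p - (q'/p)^2 * D2 p"
      unfolding D1_def D2_def by (rule P.Lfun_scale) (use p q' in simp)
    finally show ?thesis
      using constrained_triple.Lfun_split[OF T[OF q']] by (simp add: D1_def D2_def)
  qed
  hence bound: "D2 q / q^2 \<le> D2 q0 / q0^2"
    using rescaling_comparison q by blast
  have "D2 q = q * charge (a q) (g q)"
    using constrained_triple.dens2_integral_charge[OF T[OF q]] by (simp add: D2_def)
  hence charge: "charge (a q) (g q) = q * (D2 q / q^2)"
    using q by (simp add: power2_eq_square)
  have "0 \<le> D2 q" unfolding D2_def by (intro integral_nonneg_AE AE_I2 dens2_nonneg)
  hence "0 \<le> charge (a q) (g q)" unfolding charge using q by simp
  moreover have "charge (a q) (g q) \<le> q * (D2 q0 / q0^2)"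
    unfolding charge by (rule mult_left_mono[OF bound]) (use q in simp)
  ultimately show ?thesis by (simp add: D2_def)
qed

theorem lemma5p3:
  fixes \<kappa> \<omega> q0 :: real
    and a f g :: "real \<Rightarrow> real \<Rightarrow> real"
  assumes "\<kappa> > 0"
    and "pi / 2 < \<omega>" and "\<omega> < pi"
    and "0 < q0" and "q0 < min (sin \<omega> / sqrt 2) (sqrt 2 * (1 - \<omega> / pi))"
    and "\<And>q. 0 < q \<Longrightarrow> q \<le> q0 \<Longrightarrow> (a q, f q, g q) \<in> constrained \<kappa> \<omega> q"
    and "\<And>q r. 0 < q \<Longrightarrow> q \<le> q0 \<Longrightarrow> 0 \<le> r \<Longrightarrow> 0 \<le> f q r \<and> f q r \<le> pi / 2"
    and "\<And>q a' f' g'. 0 < q \<Longrightarrow> q \<le> q0 \<Longrightarrow> (a', f', g') \<in> constrained \<kappa> \<omega> q \<Longrightarrow>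
           Lfun \<kappa> (a q) (f q) (g q) \<le> Lfun \<kappa> a' f' g'"
  shows "((\<lambda>q. charge (a q) (g q)) \<longlongrightarrow> 0) (at_right 0)"
proof -
  define C where "C = integral\<^sup>L halfline (dens2 (a q0) (g q0)) / q0^2"
  have T: "constrained_triple \<kappa> \<omega> q (a q) (f q) (g q)" if "0 < q" "q \<le> q0" for q
    using assms(1,6) that by unfold_locales auto
  have "eventually (\<lambda>q. 0 < q \<and> q \<le> q0) (at_right (0::real))"
    using assms(4) by (auto simp: eventually_at_right_field intro!: exI[of _ q0])
  hence "eventually (\<lambda>q. 0 \<le> charge (a q) (g q) \<and> charge (a q) (g q) \<le> q * C) (at_right 0)"
    by eventually_elim (use minimizer_charge_bound[OF T assms(8)] in \<open>simp add: C_def\<close>)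
  hence "eventually (\<lambda>q. 0 \<le> charge (a q) (g q)) (at_right 0)"
    and "eventually (\<lambda>q. charge (a q) (g q) \<le> q * C) (at_right 0)"
    unfolding eventually_conj_iff by blast+
  moreover have "((\<lambda>q. q * C) \<longlongrightarrow> 0) (at_right 0)"
    by (auto intro!: tendsto_eq_intros)
  ultimately show ?thesis by (rule tendsto_sandwich[OF _ _ tendsto_const])
qed

end
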